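(* Let $n$ be a positive integer and let $d\in\Delta(n)$. Write $d=(d_1,\dots,d_L)$ with $d_L>0$ the last nonzero entry, and let $q=\max_k d_k$, so that $d=(1,2,\dots,q,d_{q+1},\dots,d_L)$ with $d_{q+1}\le q$. Set $b_i=d_i-d_{i+1}$ for $q\le i<L$ and $b_L=d_L$. Then the number of partitions $\alpha\in\mathcal{P}(n)$ with $\delta(\alpha)=d$ is \[\big|\,[\,d\,]\,\big|=\prod_{i=q}^{L-1}\binom{b_i+b_{i+1}+1}{b_i+1},\] where an empty product equals $1$.
   Context: A partition of a positive integer $n$ is a finite non-increasing sequence $\alpha=(\alpha_1,\dots,\alpha_l)$ of positive integers with $\sum_i\alpha_i=n$; $\mathcal{P}(n)$ denotes the set of partitions of $n$, and we set $\alpha_i=0$ for $i>l$. The diagonal sequence of $\alpha$ is $\delta(\alpha)=(d_k)_{k\ge1}$ with $d_k=\big|\{i : 1\le i\le k,\ \alpha_i+i-1\ge k\}\big|$; only finitely many $d_k$ are nonzero and trailing zeros are omitted. $\Delta(n)=\{\delta(\alpha):\alpha\in\mathcal{P}(n)\}$, and for $d\in\Delta(n)$, $[\,d\,]=\{\alpha\in\mathcal{P}(n):\delta(\alpha)=d\}$. *)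

theory Defs
  imports Main
begin

definition is_partition :: "nat \<Rightarrow> nat list \<Rightarrow> bool" where
  "is_partition n a \<longleftrightarrow> sorted_wrt (\<ge>) a \<and> (\<forall>x\<in>set a. 0 < x) \<and> sum_list a = n"

definition partitions :: "nat \<Rightarrow> nat list set" where
  "partitions n = {a. is_partition n a}"

definition part_entry :: "nat list \<Rightarrow> nat \<Rightarrow> nat" where
  "part_entry a i = (if 1 \<le> i \<and> i \<le> length a then a ! (i - 1) else 0)"

text \<open>Diagonal sequence, as a function k \<mapsto> d_k (k \<ge> 1); the value at 0 is set to 0.
  Trailing zeros are irrelevant in this representation.\<close>
definition delta :: "nat list \<Rightarrow> nat \<Rightarrow> nat" where
  "delta a k = (if k = 0 then 0
     else card {i. 1 \<le> i \<and> i \<le> k \<and> part_entry a i + i - 1 \<ge> k})"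

definition Delta :: "nat \<Rightarrow> (nat \<Rightarrow> nat) set" where
  "Delta n = delta ` partitions n"

definition diag_class :: "nat \<Rightarrow> (nat \<Rightarrow> nat) \<Rightarrow> nat list set" where
  "diag_class n d = {a \<in> partitions n. delta a = d}"

end

theory Submission
  imports Defs "HOL-Library.Multiset"
begin

text \<open>
  For a partition \<alpha> put \<beta>(i) = \<alpha>(i) + i - 1, and let L be the last index with d(L) > 0.
  Since d(k) counts the i \<le> k with \<beta>(i) \<ge> k, and \<beta>(i) \<ge> i - 1 always, each value m \<le> L
  occurs d(m) + 1 - d(m + 1) times among \<beta>(1), ..., \<beta>(L + 1), and \<beta>(L + 1) = L.
  As \<alpha> is non-increasing, consecutive \<beta>'s rise by at most one; conversely every such word
  ending in L comes from a partition, whose diagonal sequence and size are determined by the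
  multiset of its letters. So [d] is in bijection with the words that rise by at most one, end
  in L and contain each m exactly c(m) = d(m) + 1 - d(m + 1) times.
  Deleting the zeros of such a word and lowering the other letters by one leaves a word of the
  same kind; the zeros can only be put back in blocks in front of the c(1) ones, which can be
  done in (c(0) + c(1) - 1 choose c(0)) ways. Finally, the letters that occur are exactly
  q, ..., L, and there c(m) = b(m) + 1.
\<close>

section \<open>Words whose letters rise by at most one\<close>

lemma count_list_replicate [simp]: "count_list (replicate n x) y = (if x = y then n else 0)"
  by (induction n) auto

lemma length_filter_less_Suc:
  "length (filter (\<lambda>x. x < Suc m) w) = length (filter (\<lambda>x. x < m) w) + count_list w m"
  by (induction w) auto

lemma last_filter_nonzero:
  "w \<noteq> [] \<Longrightarrow> last w \<noteq> 0 \<Longrightarrow> last (filter (\<lambda>x. x \<noteq> (0::nat)) w) = last w"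
  by (cases w rule: rev_exhaust) auto

lemma split_leading_zeros:
  obtains j r where "w = replicate j (0::nat) @ r" "r = [] \<or> hd r \<noteq> 0"
proof
  have "replicate (length (takeWhile (\<lambda>x. x = 0) w)) 0 = takeWhile (\<lambda>x. x = 0) w"
    by (rule replicate_length_same) (auto dest: set_takeWhileD)
  then show "w = replicate (length (takeWhile (\<lambda>x. x = 0) w)) 0 @ dropWhile (\<lambda>x. x = 0) w"
    by simp
  show "dropWhile (\<lambda>x. x = 0) w = [] \<or> hd (dropWhile (\<lambda>x. x = 0) w) \<noteq> 0"
    using hd_dropWhile by blast
qed

abbreviation rises_le_one :: "nat list \<Rightarrow> bool" where
  "rises_le_one w \<equiv> successively (\<lambda>x y. y \<le> Suc x) w"

lemma rises_le_one_replicate_0: "rises_le_one (replicate j 0)"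
  by (simp add: successively_conv_nth)

lemma rises_le_one_Cons_filter_nonzero:
  "rises_le_one (x # w) \<Longrightarrow> rises_le_one (x # filter (\<lambda>y. y \<noteq> 0) w)"
proof (induction w arbitrary: x)
  case (Cons y w)
  show ?case
  proof (cases "y = 0")
    case True
    then have "rises_le_one (0 # filter (\<lambda>y. y \<noteq> 0) w)"
      using Cons by (intro Cons.IH) auto
    with True show ?thesis
      by (cases "filter (\<lambda>y. y \<noteq> 0) w") auto
  next
    case False
    with Cons show ?thesis by auto
  qed
qed simp

lemma rises_le_one_filter_nonzero:
  "rises_le_one w \<Longrightarrow> rises_le_one (filter (\<lambda>x. x \<noteq> 0) w)"
proof (cases w)
  case (Cons x v)
  assume "rises_le_one w"
  then have "rises_le_one (x # filter (\<lambda>y. y \<noteq> 0) v)"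
    using Cons rises_le_one_Cons_filter_nonzero by blast
  then show ?thesis
    using Cons by (auto simp: successively_Cons)
qed simp

lemma rises_le_one_nth_le:
  assumes "rises_le_one w" "i \<le> j" "j < length w"
  shows "w ! j \<le> w ! i + (j - i)"
  using assms(2,3)
proof (induction j rule: dec_induct)
  case (step j)
  then show ?case
    using successively_nth[OF assms(1), of j] by simp
qed simp

lemma rises_le_one_in_set:
  assumes "rises_le_one w" "x \<in> set w" "x \<le> y" "y \<le> last w"
  shows "y \<in> set w"
  using assms
proof (induction w arbitrary: x)
  case (Cons z w)
  show ?case
  proof (cases "w = [] \<or> y = z")
    case False
    then have "rises_le_one w" "hd w \<le> Suc z" "last w = last (z # w)"
      using Cons.prems(1) by (auto simp: successively_Cons)
    moreover have "x \<in> set w \<or> hd w \<le> y"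
      using Cons.prems(2,3) False \<open>hd w \<le> Suc z\<close> by auto
    ultimately show ?thesis
      using Cons.IH Cons.prems(3,4) False hd_in_set by (metis list.set_intros(2))
  qed (use Cons.prems in auto)
qed simp

definition zero_fillings :: "nat list \<Rightarrow> nat \<Rightarrow> nat list set" where
  "zero_fillings u z = {w. rises_le_one w \<and> filter (\<lambda>x. x \<noteq> 0) w = u \<and> count_list w 0 = z
     \<and> (w = [] \<or> last w \<noteq> 0)}"

lemma zero_fillings_Nil: "zero_fillings [] z = (if z = 0 then {[]} else {})"
proof -
  have "w = [] \<and> z = 0" if "w \<in> zero_fillings [] z" for w
  proof -
    have "\<forall>x\<in>set w. x = 0" "w = [] \<or> last w \<noteq> 0" "count_list w 0 = z"
      using that by (simp_all add: zero_fillings_def filter_empty_conv)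
    then show ?thesis
      by (cases "w = []") auto
  qed
  moreover have "[] \<in> zero_fillings [] 0"
    by (simp add: zero_fillings_def)
  ultimately show ?thesis
    by auto
qed

lemma zero_fillings_Cons:
  assumes "rises_le_one (a # u)" "a \<noteq> 0"
  shows "zero_fillings (a # u) z =
    (\<Union>j\<in>(if a = 1 then {..z} else {0}). (\<lambda>v. replicate j 0 @ a # v) ` zero_fillings u (z - j))"
proof (intro equalityI subsetI)
  fix w assume w: "w \<in> zero_fillings (a # u) z"
  obtain j r where jr: "w = replicate j 0 @ r" "r = [] \<or> hd r \<noteq> 0"
    by (rule split_leading_zeros)
  have "filter (\<lambda>x. x \<noteq> 0) r = a # u"
    using w jr by (simp add: zero_fillings_def)
  with jr obtain v where r: "r = a # v" and v_nonzero: "filter (\<lambda>x. x \<noteq> 0) v = u"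
    by (cases r) (auto split: if_splits)
  have rises: "rises_le_one (replicate j 0 @ a # v)"
    using w jr r by (simp add: zero_fillings_def)
  then have "rises_le_one v"
    by (auto simp: successively_append_iff successively_Cons)
  moreover have "count_list v 0 = z - j" "j \<le> z" "v = [] \<or> last v \<noteq> 0"
    using w jr r assms(2) by (auto simp: zero_fillings_def split: if_splits)
  ultimately have "v \<in> zero_fillings u (z - j)"
    using v_nonzero by (simp add: zero_fillings_def)
  moreover have "j = 0 \<or> a = 1"
    using rises assms(2) by (cases "j = 0") (auto simp: successively_append_iff)
  ultimately show "w \<in> (\<Union>j\<in>(if a = 1 then {..z} else {0}).
      (\<lambda>v. replicate j 0 @ a # v) ` zero_fillings u (z - j))"
    using jr r \<open>j \<le> z\<close> by auto
next
  fix w assume "w \<in> (\<Union>j\<in>(if a = 1 then {..z} else {0}).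
      (\<lambda>v. replicate j 0 @ a # v) ` zero_fillings u (z - j))"
  then obtain j v where j: "j \<le> z" "j = 0 \<or> a = 1" and v: "v \<in> zero_fillings u (z - j)"
    and w: "w = replicate j 0 @ a # v"
    by (auto split: if_splits)
  have v_nonzero: "filter (\<lambda>x. x \<noteq> 0) v = u"
    using v by (simp add: zero_fillings_def)
  have "hd v \<le> Suc a" if "v \<noteq> []"
  proof (cases "hd v = 0")
    case False
    with that v_nonzero have "hd u = hd v"
      by (cases v) auto
    with assms(1) False that v_nonzero show ?thesis
      by (cases v) auto
  qed simp
  then have "rises_le_one (a # v)"
    using v by (auto simp: zero_fillings_def successively_Cons)
  then have "rises_le_one w"
    using w j by (cases "j = 0") (auto simp: successively_append_iff rises_le_one_replicate_0)
  then show "w \<in> zero_fillings (a # u) z"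
    using w v j assms(2) by (auto simp: zero_fillings_def)
qed

lemma sum_multichoose: "(\<Sum>j\<le>z. (z - j + k - 1) choose (z - j)) = (z + k) choose z"
proof -
  have "(\<Sum>j\<le>z. (z - j + k - 1) choose (z - j)) = (\<Sum>i\<le>z. (i + k - 1) choose i)"
    by (rule sum.reindex_bij_witness[of _ "\<lambda>i. z - i" "\<lambda>i. z - i"]) auto
  also have "\<dots> = (z + k) choose z"
  proof (cases k)
    case 0
    then have "(\<Sum>i\<le>z. (i + k - 1) choose i) = (\<Sum>i\<in>{0}. (i + k - 1) choose i)"
      by (intro sum.mono_neutral_right) auto
    with 0 show ?thesis
      by simp
  next
    case (Suc r)
    then show ?thesis
      using sum_choose_lower[of r z] by (simp add: add.commute)
  qed
  finally show ?thesis .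
qed

lemma card_zero_fillings:
  assumes "rises_le_one u" "0 \<notin> set u"
  shows "finite (zero_fillings u z) \<and> card (zero_fillings u z) = (z + count_list u 1 - 1) choose z"
  using assms
proof (induction u arbitrary: z)
  case Nil
  then show ?case
    by (simp add: zero_fillings_Nil)
next
  case (Cons a u)
  let ?J = "if a = 1 then {..z} else {0}"
  let ?F = "\<lambda>j. (\<lambda>v. replicate j 0 @ a # v) ` zero_fillings u (z - j)"
  have a: "a \<noteq> 0"
    using Cons.prems(2) by auto
  have IH: "finite (zero_fillings u z') \<and>
      card (zero_fillings u z') = (z' + count_list u 1 - 1) choose z'" for z'
    using Cons.IH Cons.prems by (auto simp: successively_Cons)
  have card_F: "finite (?F j) \<and> card (?F j) = (z - j + count_list u 1 - 1) choose (z - j)" for j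
    using IH by (simp add: card_image inj_on_def)
  have "?F i \<inter> ?F j = {}" if "i \<noteq> j" for i j
  proof -
    have zeros: "takeWhile (\<lambda>x. x = 0) (replicate k 0 @ a # v) = replicate k 0" for k v
      using a by (induction k) auto
    then have "replicate i 0 @ a # v \<noteq> replicate j 0 @ a # v'" for v v'
      using that by (metis length_replicate)
    then show ?thesis
      by blast
  qed
  then have "card (\<Union>j\<in>?J. ?F j) = (\<Sum>j\<in>?J. card (?F j))"
    using card_F by (intro card_UN_disjoint) auto
  also have "\<dots> = (z + count_list (a # u) 1 - 1) choose z"
    using card_F sum_multichoose[of z "count_list u 1"] by auto
  finally show ?case
    using zero_fillings_Cons[OF Cons.prems(1) a] card_F by simp
qed

definition lower_word :: "nat list \<Rightarrow> nat list" where
  "lower_word w = map (\<lambda>x. x - 1) (filter (\<lambda>x. x \<noteq> 0) w)"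

lemma map_Suc_lower_word: "map Suc (lower_word w) = filter (\<lambda>x. x \<noteq> 0) w"
  by (induction w) (auto simp: lower_word_def)

lemma count_list_lower_word: "count_list (lower_word w) m = count_list w (Suc m)"
  by (induction w) (auto simp: lower_word_def)

lemma rises_le_one_lower_word: "rises_le_one w \<Longrightarrow> rises_le_one (lower_word w)"
  unfolding lower_word_def successively_map
  by (rule successively_mono[OF rises_le_one_filter_nonzero]) auto

definition rise_words :: "(nat \<Rightarrow> nat) \<Rightarrow> nat \<Rightarrow> nat list set" where
  "rise_words c T = {w. w \<noteq> [] \<and> last w = T \<and> rises_le_one w \<and> (\<forall>m. count_list w m = c m)}"

lemma rise_words_0:
  assumes "1 \<le> c 0" "\<And>m. 0 < m \<Longrightarrow> c m = 0"
  shows "rise_words c 0 = {replicate (c 0) 0}"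
proof (intro equalityI subsetI)
  fix w assume w: "w \<in> rise_words c 0"
  have "x = 0" if "x \<in> set w" for x
  proof (rule ccontr)
    assume "x \<noteq> 0"
    then have "count_list w x = 0"
      using w assms(2) by (simp add: rise_words_def)
    with that show False
      by (simp add: count_list_0_iff)
  qed
  then have "replicate (length w) 0 = w"
    by (simp add: replicate_length_same)
  moreover have "count_list w 0 = c 0"
    using w by (simp add: rise_words_def)
  then have "length w = c 0"
    by (metis \<open>replicate (length w) 0 = w\<close> count_list_replicate)
  ultimately show "w \<in> {replicate (c 0) 0}"
    by simp
next
  fix w :: "nat list"
  assume "w \<in> {replicate (c 0) 0}"
  moreover have "count_list (replicate (c 0) 0) m = c m" for m
    using assms(2) by (cases m) auto
  ultimately show "w \<in> rise_words c 0"
    using assms(1) by (simp add: rise_words_def rises_le_one_replicate_0)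
qed

lemma rise_words_Suc:
  "rise_words c (Suc T) = (\<Union>v\<in>rise_words (\<lambda>m. c (Suc m)) T. zero_fillings (map Suc v) (c 0))"
proof (intro equalityI subsetI)
  fix w assume w: "w \<in> rise_words c (Suc T)"
  then have "w \<noteq> []" "last w \<noteq> 0"
    by (simp_all add: rise_words_def)
  then have "last w \<in> set (filter (\<lambda>x. x \<noteq> 0) w)"
    by simp
  then have "map Suc (lower_word w) \<noteq> []"
    unfolding map_Suc_lower_word by (metis empty_iff empty_set)
  moreover have "last (map Suc (lower_word w)) = Suc T"
    using w last_filter_nonzero[OF \<open>w \<noteq> []\<close> \<open>last w \<noteq> 0\<close>]
    by (simp add: rise_words_def map_Suc_lower_word)
  ultimately have "lower_word w \<noteq> []" "last (lower_word w) = T"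
    by (simp_all add: last_map)
  then have "lower_word w \<in> rise_words (\<lambda>m. c (Suc m)) T"
    using w rises_le_one_lower_word by (simp add: rise_words_def count_list_lower_word)
  moreover have "w \<in> zero_fillings (map Suc (lower_word w)) (c 0)"
    using w by (simp add: rise_words_def zero_fillings_def map_Suc_lower_word)
  ultimately show "w \<in> (\<Union>v\<in>rise_words (\<lambda>m. c (Suc m)) T. zero_fillings (map Suc v) (c 0))"
    by blast
next
  fix w assume "w \<in> (\<Union>v\<in>rise_words (\<lambda>m. c (Suc m)) T. zero_fillings (map Suc v) (c 0))"
  then obtain v where v: "v \<in> rise_words (\<lambda>m. c (Suc m)) T"
    and w: "w \<in> zero_fillings (map Suc v) (c 0)"
    by blast
  have nonzero: "filter (\<lambda>x. x \<noteq> 0) w = map Suc v" and "v \<noteq> []"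
    using v w by (simp_all add: zero_fillings_def rise_words_def)
  then have "w \<noteq> []"
    by auto
  then have "last w \<noteq> 0"
    using w by (simp add: zero_fillings_def)
  have "last w = last (map Suc v)"
    using last_filter_nonzero[OF \<open>w \<noteq> []\<close> \<open>last w \<noteq> 0\<close>] nonzero by simp
  then have "last w = Suc T"
    using v \<open>v \<noteq> []\<close> by (simp add: rise_words_def last_map)
  moreover have "count_list w m = c m" for m
  proof (cases m)
    case 0
    with w show ?thesis
      by (simp add: zero_fillings_def)
  next
    case (Suc k)
    have "count_list w (Suc k) = count_list v k"
      using count_list_lower_word[of w k] map_Suc_lower_word[of w] nonzero by simp
    with v Suc show ?thesis
      by (simp add: rise_words_def)
  qed
  ultimately show "w \<in> rise_words c (Suc T)"
    using w \<open>w \<noteq> []\<close> by (simp add: rise_words_def zero_fillings_def)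
qed

lemma card_rise_words:
  assumes "1 \<le> c T" "\<And>m. T < m \<Longrightarrow> c m = 0"
  shows "finite (rise_words c T) \<and> card (rise_words c T) = (\<Prod>m<T. (c m + c (Suc m) - 1) choose c m)"
  using assms
proof (induction T arbitrary: c)
  case 0
  then show ?case
    by (simp add: rise_words_0)
next
  case (Suc T)
  let ?F = "\<lambda>v. zero_fillings (map Suc v) (c 0)"
  have IH: "finite (rise_words (\<lambda>m. c (Suc m)) T) \<and>
      card (rise_words (\<lambda>m. c (Suc m)) T) =
        (\<Prod>m<T. (c (Suc m) + c (Suc (Suc m)) - 1) choose c (Suc m))"
    using Suc by auto
  have card_F: "finite (?F v) \<and> card (?F v) = (c 0 + c 1 - 1) choose c 0"
    if "v \<in> rise_words (\<lambda>m. c (Suc m)) T" for v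
  proof -
    have "rises_le_one (map Suc v)" "count_list (map Suc v) 1 = c 1"
      using that count_list_map_conv[of Suc v 0]
      by (simp_all add: rise_words_def successively_map)
    then show ?thesis
      using card_zero_fillings[of "map Suc v" "c 0"] by simp
  qed
  have "?F v \<inter> ?F v' = {}" if "v \<noteq> v'" for v v'
    using that by (auto simp: zero_fillings_def)
  then have "card (rise_words c (Suc T)) = (\<Sum>v\<in>rise_words (\<lambda>m. c (Suc m)) T. card (?F v))"
    unfolding rise_words_Suc using IH card_F by (intro card_UN_disjoint) auto
  also have "\<dots> = ((c 0 + c 1 - 1) choose c 0) * card (rise_words (\<lambda>m. c (Suc m)) T)"
    using card_F by simp
  also have "\<dots> = (\<Prod>m<Suc T. (c m + c (Suc m) - 1) choose c m)"
    using IH by (subst prod.lessThan_Suc_shift) simp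
  finally show ?case
    using IH card_F by (simp add: rise_words_Suc)
qed

section \<open>Beta words of partitions\<close>

lemma part_entry_Suc: "part_entry a (Suc i) = (if i < length a then a ! i else 0)"
  by (simp add: part_entry_def)

lemma map_part_entry_upt:
  "length a \<le> N \<Longrightarrow> map (\<lambda>i. part_entry a (Suc i)) [0..<N] = a @ replicate (N - length a) 0"
  by (rule nth_equalityI) (auto simp: part_entry_Suc nth_append)

lemma delta_conv_card: "delta a k = card {i. i < k \<and> k \<le> part_entry a (Suc i) + i}"
proof (cases k)
  case (Suc k')
  have "{i. 1 \<le> i \<and> i \<le> k \<and> k \<le> part_entry a i + i - 1} =
      Suc ` {i. i < k \<and> k \<le> part_entry a (Suc i) + i}"
  proof (intro equalityI subsetI)
    fix j assume "j \<in> {i. 1 \<le> i \<and> i \<le> k \<and> k \<le> part_entry a i + i - 1}"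
    then have "j = Suc (j - 1)" "j - 1 \<in> {i. i < k \<and> k \<le> part_entry a (Suc i) + i}"
      by auto
    then show "j \<in> Suc ` {i. i < k \<and> k \<le> part_entry a (Suc i) + i}"
      by (rule image_eqI)
  qed auto
  then show ?thesis
    using Suc by (simp add: delta_def card_image)
qed (simp add: delta_def)

lemma delta_pos: "i < k \<Longrightarrow> k \<le> part_entry a (Suc i) + i \<Longrightarrow> 0 < delta a k"
  unfolding delta_conv_card by (subst card_gt_0_iff) auto

lemma delta_pos_imp_le_sum_length: "0 < delta a k \<Longrightarrow> k \<le> sum_list a + length a"
proof -
  assume "0 < delta a k"
  then obtain i where "i < k" "k \<le> part_entry a (Suc i) + i"
    unfolding delta_conv_card by (metis (no_types, lifting) card.empty empty_Collect_eq less_irrefl)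
  moreover have "part_entry a (Suc i) \<le> sum_list a"
    by (simp add: part_entry_Suc elem_le_sum_list)
  ultimately show ?thesis
    by (cases "i < length a") (auto simp: part_entry_Suc)
qed

definition beta_word :: "nat \<Rightarrow> nat list \<Rightarrow> nat list" where
  "beta_word N a = map (\<lambda>i. part_entry a (Suc i) + i) [0..<N]"

lemma length_beta_word [simp]: "length (beta_word N a) = N"
  by (simp add: beta_word_def)

lemma nth_beta_word [simp]: "i < N \<Longrightarrow> beta_word N a ! i = part_entry a (Suc i) + i"
  by (simp add: beta_word_def del: upt_Suc)

lemma delta_add_length_filter_less:
  assumes "m \<le> N"
  shows "delta a m + length (filter (\<lambda>x. x < m) (beta_word N a)) = m"
proof -
  let ?high = "{i. i < m \<and> m \<le> part_entry a (Suc i) + i}"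
  let ?low = "{i. i < m \<and> part_entry a (Suc i) + i < m}"
  \<comment> \<open>the letter at an index i \<ge> m is at least i, so only indices below m contribute\<close>
  have "length (filter (\<lambda>x. x < m) (beta_word N a)) = card ?low"
    using assms by (auto simp: length_filter_conv_card intro!: arg_cong[where f = card])
  moreover have "card ?high + card ?low = card (?high \<union> ?low)"
    by (rule card_Un_disjoint[symmetric]) auto
  moreover have "?high \<union> ?low = {..<m}"
    by auto
  ultimately show ?thesis
    by (simp add: delta_conv_card)
qed

lemma count_list_beta_word:
  "m < N \<Longrightarrow> count_list (beta_word N a) m + delta a (Suc m) = Suc (delta a m)"
  using delta_add_length_filter_less[of m N a] delta_add_length_filter_less[of "Suc m" N a]
  by (simp add: length_filter_less_Suc)

lemma beta_word_add:
  assumes "length a \<le> N"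
  shows "beta_word (N + k) a = beta_word N a @ [N..<N + k]"
proof -
  have "map (\<lambda>i. part_entry a (Suc i) + i) [N..<N + k] = [N..<N + k]"
    using assms by (intro map_idI) (auto simp: part_entry_Suc)
  then show ?thesis
    unfolding beta_word_def by (simp only: upt_add_eq_append[OF le0] map_append)
qed

lemma delta_eq_if_mset_beta_word_eq:
  assumes "length a \<le> N" "length a' \<le> N" "mset (beta_word N a) = mset (beta_word N a')"
  shows "delta a = delta a'"
proof
  fix m
  have "mset (beta_word (N + m) a) = mset (beta_word (N + m) a')"
    using assms by (simp add: beta_word_add)
  then have "length (filter (\<lambda>x. x < m) (beta_word (N + m) a)) =
      length (filter (\<lambda>x. x < m) (beta_word (N + m) a'))"
    by (metis mset_filter size_mset)
  then show "delta a m = delta a' m"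
    using delta_add_length_filter_less[of m "N + m" a] delta_add_length_filter_less[of m "N + m" a']
    by simp
qed

lemma sum_list_beta_word:
  assumes "length a \<le> N"
  shows "sum_list (beta_word N a) = sum_list a + (\<Sum>i<N. i)"
proof -
  have "sum_list (beta_word N a) = sum_list (map (\<lambda>i. part_entry a (Suc i)) [0..<N]) + (\<Sum>i<N. i)"
    by (simp add: beta_word_def sum_list_addf atLeast0LessThan interv_sum_list_conv_sum_set_nat
        del: upt_Suc)
  then show ?thesis
    using assms by (simp add: map_part_entry_upt)
qed

lemma beta_word_inj:
  assumes "\<forall>x\<in>set a. 0 < x" "\<forall>x\<in>set a'. 0 < x" "length a \<le> N" "length a' \<le> N"
    and "beta_word N a = beta_word N a'"
  shows "a = a'"
proof -
  have "part_entry a (Suc i) = part_entry a' (Suc i)" if "i < N" for i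
    using nth_beta_word[OF that, of a] nth_beta_word[OF that, of a'] assms(5) by simp
  then have "map (\<lambda>i. part_entry a (Suc i)) [0..<N] = map (\<lambda>i. part_entry a' (Suc i)) [0..<N]"
    by simp
  then have "filter (\<lambda>x. 0 < x) (a @ replicate (N - length a) 0) =
      filter (\<lambda>x. 0 < x) (a' @ replicate (N - length a') 0)"
    using assms(3,4) by (simp add: map_part_entry_upt)
  with assms(1,2) show ?thesis
    by simp
qed

lemma rises_le_one_beta_word: "sorted_wrt (\<ge>) a \<Longrightarrow> rises_le_one (beta_word N a)"
  by (auto simp: successively_conv_nth part_entry_Suc sorted_wrt_iff_nth_less)

lemma last_beta_word: "length a \<le> N \<Longrightarrow> last (beta_word (Suc N) a) = N"
  by (simp add: last_conv_nth[of "beta_word (Suc N) a"] part_entry_Suc flip: length_greater_0_conv)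

lemma partition_list_of_antimono:
  fixes f :: "nat \<Rightarrow> nat"
  assumes "antimono f" "f N = 0"
  obtains a where "sorted_wrt (\<ge>) a" "\<forall>x\<in>set a. 0 < x" "length a \<le> N"
    "\<And>i. part_entry a (Suc i) = f i"
proof
  define l where "l = (LEAST j. f j = 0)"
  have "f l = 0" "l \<le> N"
    unfolding l_def using assms(2) by (auto intro: LeastI Least_le)
  then have "f i = 0" if "l \<le> i" for i
    using assms(1) that by (metis antimonoD le_zero_eq)
  moreover have "0 < f i" if "i < l" for i
    using not_less_Least[of i "\<lambda>j. f j = 0"] that unfolding l_def by simp
  ultimately show "part_entry (map f [0..<l]) (Suc i) = f i" for i
    by (auto simp: part_entry_Suc)
  show "sorted_wrt (\<ge>) (map f [0..<l])"
    using assms(1) by (auto simp: sorted_wrt_iff_nth_less antimonoD)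
  show "\<forall>x\<in>set (map f [0..<l]). 0 < x"
    using \<open>\<And>i. i < l \<Longrightarrow> 0 < f i\<close> by auto
  show "length (map f [0..<l]) \<le> N"
    using \<open>l \<le> N\<close> by simp
qed

lemma beta_word_preimage:
  assumes "rises_le_one w" "length w = Suc N" "last w = N"
  obtains a where "sorted_wrt (\<ge>) a" "\<forall>x\<in>set a. 0 < x" "length a \<le> N" "beta_word (Suc N) a = w"
proof -
  have "w \<noteq> []"
    using assms(2) by auto
  then have "w ! N = N"
    using assms(2,3) by (simp add: last_conv_nth)
  then have index_le: "i \<le> w ! i" if "i \<le> N" for i
    using rises_le_one_nth_le[OF assms(1) that] assms(2) that by simp
  \<comment> \<open>the parts are read off as w ! i - i; clamping at N makes this antitone on all of nat\<close>
  define f where "f i = w ! min i N - min i N" for i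
  have "f (Suc i) \<le> f i" for i
    using successively_nth[OF assms(1), of i] assms(2) by (cases "i < N") (auto simp: f_def min_def)
  then have "antimono f"
    by (simp add: antimono_iff_le_Suc)
  moreover have "f N = 0"
    using \<open>w ! N = N\<close> by (simp add: f_def)
  ultimately obtain a where a: "sorted_wrt (\<ge>) a" "\<forall>x\<in>set a. 0 < x" "length a \<le> N"
    and entries: "\<And>i. part_entry a (Suc i) = f i"
    using partition_list_of_antimono by blast
  have "beta_word (Suc N) a = w"
    using assms(2) index_le by (intro nth_equalityI) (auto simp: entries f_def)
  with a that show ?thesis
    by blast
qed

lemma beta_word_bounded:
  assumes "\<forall>x\<in>set a. 0 < x" "\<And>k. 0 < delta a k \<Longrightarrow> k \<le> L"
  shows "length a \<le> L" "set (beta_word (Suc L) a) \<subseteq> {..L}"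
proof -
  have entry_le: "part_entry a (Suc i) + i \<le> L" if "i < length a" for i
    using that assms by (intro assms(2) delta_pos[of i]) (auto simp: part_entry_Suc)
  show "length a \<le> L"
    using entry_le[of "length a - 1"] assms(1) by (cases a rule: rev_exhaust) (auto simp: part_entry_Suc)
  then show "set (beta_word (Suc L) a) \<subseteq> {..L}"
    using entry_le by (auto simp: in_set_conv_nth part_entry_Suc)
qed

lemma mset_beta_word_eq_if_delta_eq:
  assumes "\<forall>x\<in>set a. 0 < x" "\<forall>x\<in>set a'. 0 < x" "\<And>k. 0 < delta a k \<Longrightarrow> k \<le> L"
    and "delta a = delta a'"
  shows "mset (beta_word (Suc L) a) = mset (beta_word (Suc L) a')"
proof (rule multiset_eqI)
  fix m
  have "set (beta_word (Suc L) a) \<subseteq> {..L}" "set (beta_word (Suc L) a') \<subseteq> {..L}"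
    using assms beta_word_bounded by metis+
  then show "count (mset (beta_word (Suc L) a)) m = count (mset (beta_word (Suc L) a')) m"
  proof (cases "m \<le> L")
    case True
    then show ?thesis
      using count_list_beta_word[of m "Suc L" a] count_list_beta_word[of m "Suc L" a'] assms(4)
      by (simp add: count_mset)
  next
    case False
    with \<open>set (beta_word (Suc L) a) \<subseteq> {..L}\<close> \<open>set (beta_word (Suc L) a') \<subseteq> {..L}\<close>
    have "m \<notin> set (beta_word (Suc L) a)" "m \<notin> set (beta_word (Suc L) a')"
      by auto
    then show ?thesis
      by (simp add: count_mset count_list_0_iff)
  qed
qed

lemma set_beta_word_eq_atLeastAtMost:
  assumes "sorted_wrt (\<ge>) a" "\<forall>x\<in>set a. 0 < x" "\<And>k. 0 < delta a k \<Longrightarrow> k \<le> L"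
  shows "set (beta_word (Suc L) a) = {Min (set (beta_word (Suc L) a))..L}"
proof -
  let ?w = "beta_word (Suc L) a"
  have bounded: "length a \<le> L" "set ?w \<subseteq> {..L}"
    using beta_word_bounded[OF assms(2,3)] by auto
  have "?w \<noteq> []" "last ?w = L"
    using bounded(1) last_beta_word by (auto simp flip: length_greater_0_conv)
  then have "Min (set ?w) \<in> set ?w"
    by simp
  show ?thesis
  proof (intro equalityI subsetI)
    fix x assume "x \<in> {Min (set ?w)..L}"
    then show "x \<in> set ?w"
      using rises_le_one_in_set[OF rises_le_one_beta_word[OF assms(1)] \<open>Min (set ?w) \<in> set ?w\<close>]
        \<open>last ?w = L\<close> by simp
  qed (use bounded(2) in auto)
qed

lemma Max_delta_eq_Min_beta_word:
  assumes "is_partition n a" "0 < n" "\<And>k. 0 < delta a k \<Longrightarrow> k \<le> L"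
  shows "Max (delta a ` {1..L}) = Min (set (beta_word (Suc L) a))"
proof -
  let ?w = "beta_word (Suc L) a"
  define \<mu> where "\<mu> = Min (set ?w)"
  have sorted: "sorted_wrt (\<ge>) a" and pos: "\<forall>x\<in>set a. 0 < x" and "a \<noteq> []"
    using assms(1,2) by (auto simp: is_partition_def)
  have set_w: "set ?w = {\<mu>..L}"
    unfolding \<mu>_def using sorted pos assms(3) by (rule set_beta_word_eq_atLeastAtMost)
  have "?w \<noteq> []"
    by (simp flip: length_greater_0_conv)
  then have "\<mu> \<in> set ?w"
    by (simp add: \<mu>_def)
  have "0 \<notin> set ?w"
    using pos \<open>a \<noteq> []\<close>
    by (auto simp: in_set_conv_nth part_entry_Suc simp flip: length_greater_0_conv)
  then have "1 \<le> \<mu>"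
    using \<open>\<mu> \<in> set ?w\<close> by (cases \<mu>) auto
  have counts: "count_list ?w m + delta a (Suc m) = Suc (delta a m)" if "m \<le> L" for m
    using that by (intro count_list_beta_word) simp
  have below: "delta a m = m" if "m \<le> \<mu>" for m
    using that
  proof (induction m)
    case (Suc m)
    then have "count_list ?w m = 0"
      by (simp add: set_w count_list_0_iff)
    with Suc counts[of m] set_w show ?case
      using \<open>\<mu> \<in> set ?w\<close> by simp
  qed (simp add: delta_def)
  have above: "delta a k \<le> delta a \<mu>" if "\<mu> \<le> k" "k \<le> Suc L" for k
    using that
  proof (induction k rule: dec_induct)
    case (step k)
    then have "count_list ?w k \<noteq> 0"
      by (simp add: set_w count_list_0_iff)
    with step counts[of k] show ?case
      by simp
  qed simp
  show ?thesis
    unfolding \<mu>_def[symmetric]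
  proof (rule Max_eqI)
    fix y assume "y \<in> delta a ` {1..L}"
    then obtain k where "k \<in> {1..L}" "y = delta a k"
      by blast
    then show "y \<le> \<mu>"
      using below[of k] above[of k] below[of \<mu>] by (cases "k \<le> \<mu>") auto
  next
    show "\<mu> \<in> delta a ` {1..L}"
      using below[of \<mu>] \<open>1 \<le> \<mu>\<close> \<open>\<mu> \<in> set ?w\<close> set_w by force
  qed simp
qed

lemma set_beta_word:
  assumes "is_partition n a" "0 < n" "\<And>k. 0 < delta a k \<Longrightarrow> k \<le> L"
  shows "set (beta_word (Suc L) a) = {Max (delta a ` {1..L})..L}"
  using assms set_beta_word_eq_atLeastAtMost[of a L] Max_delta_eq_Min_beta_word[OF assms]
  by (simp add: is_partition_def)

section \<open>Counting a diagonal class\<close>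

lemma mem_diag_class_iff:
  "a \<in> diag_class n d \<longleftrightarrow>
    sorted_wrt (\<ge>) a \<and> (\<forall>x\<in>set a. 0 < x) \<and> sum_list a = n \<and> delta a = d"
  by (auto simp: diag_class_def partitions_def is_partition_def)

lemma mem_diag_class_if_mset_beta_word_eq:
  assumes "is_partition n a0" "sorted_wrt (\<ge>) a" "\<forall>x\<in>set a. 0 < x"
    and "length a \<le> N" "length a0 \<le> N" "mset (beta_word N a) = mset (beta_word N a0)"
  shows "a \<in> diag_class n (delta a0)"
proof -
  have "delta a = delta a0"
    using assms(4-6) by (rule delta_eq_if_mset_beta_word_eq)
  moreover have "sum_list a = n"
    using sum_list_beta_word[OF assms(4)] sum_list_beta_word[OF assms(5)] assms(1,6)
    by (simp add: is_partition_def flip: sum_mset_sum_list)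
  ultimately show ?thesis
    using assms(2,3) by (simp add: mem_diag_class_iff)
qed

lemma bij_betw_beta_word_diag_class:
  assumes "is_partition n a0" "\<And>k. 0 < delta a0 k \<Longrightarrow> k \<le> L"
  shows "bij_betw (beta_word (Suc L)) (diag_class n (delta a0))
    (rise_words (count_list (beta_word (Suc L) a0)) L)"
proof (rule bij_betw_imageI)
  let ?D = "diag_class n (delta a0)"
  let ?w0 = "beta_word (Suc L) a0"
  have pos0: "\<forall>x\<in>set a0. 0 < x"
    using assms(1) by (simp add: is_partition_def)
  have length_le: "length a \<le> L" if "a \<in> ?D" for a
    using that assms(2) by (intro beta_word_bounded(1)) (auto simp: mem_diag_class_iff)
  show "inj_on (beta_word (Suc L)) ?D"
  proof (rule inj_onI)
    fix a a' assume "a \<in> ?D" "a' \<in> ?D" "beta_word (Suc L) a = beta_word (Suc L) a'"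
    then show "a = a'"
      using length_le[of a] length_le[of a']
      by (intro beta_word_inj[of a a' "Suc L"]) (auto simp: mem_diag_class_iff)
  qed
  show "beta_word (Suc L) ` ?D = rise_words (count_list ?w0) L"
  proof (intro equalityI subsetI)
    fix w assume "w \<in> beta_word (Suc L) ` ?D"
    then obtain a where a: "a \<in> ?D" and w: "w = beta_word (Suc L) a"
      by blast
    then have "mset w = mset ?w0"
      using mset_beta_word_eq_if_delta_eq[of a a0 L] pos0 assms(2) by (simp add: mem_diag_class_iff)
    then have "count_list w m = count_list ?w0 m" for m
      by (metis count_mset)
    then show "w \<in> rise_words (count_list ?w0) L"
      using a w length_le[OF a]
      by (auto simp: rise_words_def mem_diag_class_iff rises_le_one_beta_word last_beta_word
          simp flip: length_greater_0_conv)
  next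
    fix w assume w: "w \<in> rise_words (count_list ?w0) L"
    then have mset_w: "mset w = mset ?w0"
      by (simp add: rise_words_def multiset_eq_iff count_mset)
    then have "length w = Suc L"
      by (metis length_beta_word size_mset)
    then obtain a where a: "sorted_wrt (\<ge>) a" "\<forall>x\<in>set a. 0 < x" "length a \<le> L"
      and w_eq: "beta_word (Suc L) a = w"
      using w beta_word_preimage[of w L] by (auto simp: rise_words_def)
    have "a \<in> ?D"
      using mem_diag_class_if_mset_beta_word_eq[OF assms(1) a(1,2), of "Suc L"] a(3)
        beta_word_bounded(1)[OF pos0 assms(2)] mset_w w_eq by simp
    with w_eq show "w \<in> beta_word (Suc L) ` ?D"
      by blast
  qed
qed

lemma card_diag_class:
  assumes "is_partition n a0" "\<And>k. 0 < delta a0 k \<Longrightarrow> k \<le> L"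
  defines "c \<equiv> count_list (beta_word (Suc L) a0)"
  shows "card (diag_class n (delta a0)) = (\<Prod>m<L. (c m + c (Suc m) - 1) choose c m)"
proof -
  have pos0: "\<forall>x\<in>set a0. 0 < x"
    using assms(1) by (simp add: is_partition_def)
  have "beta_word (Suc L) a0 \<noteq> []"
    by (simp flip: length_greater_0_conv)
  then have "L \<in> set (beta_word (Suc L) a0)"
    using last_beta_word[OF beta_word_bounded(1)[OF pos0 assms(2)]] last_in_set by metis
  then have "1 \<le> c L"
    using count_list_0_iff[of "beta_word (Suc L) a0" L] by (simp add: c_def)
  moreover have "c m = 0" if "L < m" for m
    using beta_word_bounded(2)[OF pos0 assms(2)] that by (auto simp: c_def count_list_0_iff)
  ultimately show ?thesis
    using bij_betw_same_card[OF bij_betw_beta_word_diag_class[OF assms(1,2)]] card_rise_words[of c L]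
    by (simp add: c_def)
qed

lemma prod_choose_counts:
  fixes b c :: "nat \<Rightarrow> nat"
  assumes "\<And>m. m < q \<Longrightarrow> c m = 0" "\<And>m. q \<le> m \<Longrightarrow> m \<le> L \<Longrightarrow> c m = b m + 1"
  shows "(\<Prod>m<L. (c m + c (Suc m) - 1) choose c m) =
    (\<Prod>m\<in>{q..<L}. (b m + b (Suc m) + 1) choose (b m + 1))"
proof -
  have "(\<Prod>m<L. (c m + c (Suc m) - 1) choose c m) =
      (\<Prod>m\<in>{q..<L}. (c m + c (Suc m) - 1) choose c m)"
    by (rule prod.mono_neutral_right) (auto simp: assms(1))
  also have "\<dots> = (\<Prod>m\<in>{q..<L}. (b m + b (Suc m) + 1) choose (b m + 1))"
    by (rule prod.cong) (auto simp: assms(2))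
  finally show ?thesis .
qed

theorem theorem4p6:
  fixes n :: nat and d :: "nat \<Rightarrow> nat"
  assumes "0 < n" and "d \<in> Delta n"
  defines "L \<equiv> GREATEST k. 0 < d k"
  defines "q \<equiv> Max (d ` {1..L})"
  defines "b \<equiv> (\<lambda>i. if i < L then d i - d (Suc i) else d L)"
  shows "card (diag_class n d) = (\<Prod>i\<in>{q..<L}. (b i + b (Suc i) + 1) choose (b i + 1))"
proof -
  obtain a0 where a0: "is_partition n a0" "delta a0 = d"
    using assms(2) by (auto simp: Delta_def partitions_def)
  have support: "k \<le> L" if "0 < d k" for k
    unfolding L_def using that a0(2) delta_pos_imp_le_sum_length by (intro Greatest_le_nat) auto
  then have "d (Suc L) = 0"
    by fastforce
  define c where "c = count_list (beta_word (Suc L) a0)"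
  have "set (beta_word (Suc L) a0) = {q..L}"
    unfolding q_def using set_beta_word[OF a0(1) assms(1)] a0(2) support by simp
  then have c_pos: "c m \<noteq> 0 \<longleftrightarrow> q \<le> m \<and> m \<le> L" for m
    by (simp add: c_def count_list_0_iff)
  have "c m = b m + 1" if "q \<le> m" "m \<le> L" for m
    using count_list_beta_word[of m "Suc L" a0] c_pos[of m] that a0(2) \<open>d (Suc L) = 0\<close>
    by (auto simp: c_def b_def)
  moreover have "c m = 0" if "m < q" for m
    using c_pos[of m] that by simp
  ultimately have "(\<Prod>m<L. (c m + c (Suc m) - 1) choose c m) =
      (\<Prod>i\<in>{q..<L}. (b i + b (Suc i) + 1) choose (b i + 1))"
    by (intro prod_choose_counts)
  moreover have "card (diag_class n d) = (\<Prod>m<L. (c m + c (Suc m) - 1) choose c m)"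
    using card_diag_class[OF a0(1)] a0(2) support by (simp add: c_def)
  ultimately show ?thesis
    by simp
qed

end
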